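(* Let $g\in\mathrm{PLA}$ with PLA coefficients $\hat g(n)$, $n\ge0$, and let $t\in\mathbb{T}$ be such that $g^*(t)=A<\infty$. Then the power series $G(z)=\sum_{n\ge0}\hat g(n)z^n$ converges for $|z|<1$ and $|G(z)|\le 3A$ for all $z\in Q_t$ with $|z|<1$.
   Context: $\mathrm{PLA}$ is the set of measurable $g$ on $\mathbb{T}=\mathbb{R}/2\pi\mathbb{Z}$ for which there exist complex numbers $c(n)$, $n\ge0$, with $\sum_{0\le n<N}c(n)e^{int}\to g(t)$ for a.e. $t$; these coefficients are unique and are denoted $\hat g(n)$. Define $g^*(t)=\sup_N\left|\sum_{0\le n<N}\hat g(n)e^{int}\right|$, $G(z)=\sum_{n\ge0}\hat g(n)z^n$, and the Privalov cone $Q_t=\mathrm{conv}\big(\{e^{it}\}\cup\{z\in\mathbb{C}:|z|<\tfrac12\}\big)$ (closed convex hull as a subset of the closed unit disc). *)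

theory Defs
  imports "HOL-Analysis.Analysis"
begin

text \<open>Functions on the circle T = R/2piZ are modelled as 2pi-periodic functions real => complex.\<close>

definition pla_partial :: "(nat \<Rightarrow> complex) \<Rightarrow> nat \<Rightarrow> real \<Rightarrow> complex" where
  "pla_partial c N t = (\<Sum>n<N. c n * exp (\<i> * of_nat n * of_real t))"

definition is_pla_coeffs :: "(real \<Rightarrow> complex) \<Rightarrow> (nat \<Rightarrow> complex) \<Rightarrow> bool" where
  "is_pla_coeffs g c \<longleftrightarrow>
     (AE t in lebesgue. (\<lambda>N. pla_partial c N t) \<longlonglongrightarrow> g t)"

definition PLA :: "(real \<Rightarrow> complex) set" where
  "PLA = {g. g \<in> borel_measurable lebesgue \<and> (\<forall>t. g (t + 2 * pi) = g t)
             \<and> (\<exists>c. is_pla_coeffs g c)}"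

definition pla_hat :: "(real \<Rightarrow> complex) \<Rightarrow> nat \<Rightarrow> complex" where
  "pla_hat g = (THE c. is_pla_coeffs g c)"

definition pla_max :: "(nat \<Rightarrow> complex) \<Rightarrow> real \<Rightarrow> ereal" where
  "pla_max c t = (SUP N. ereal (norm (pla_partial c N t)))"

definition pla_star :: "(real \<Rightarrow> complex) \<Rightarrow> real \<Rightarrow> ereal" where
  "pla_star g t = pla_max (pla_hat g) t"

definition privalov_cone :: "real \<Rightarrow> complex set" where
  "privalov_cone t = closure (convex hull (insert (cis t) (ball 0 (1/2))))"

end

theory Submission
  imports Defs
begin

(* Put a n = c n * cis (n t); the hypothesis g^*(t) = A says exactly that all
   partial sums of the series a n are bounded by A.  Two consequences are used:
   (1) each coefficient satisfies |c n| = |a n| <= 2A, so the power series with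
       coefficients c converges in the open unit disc;
   (2) by Abel's summation by parts, a power series whose coefficients have partial sums
       bounded by A satisfies |sum a n w^n| <= |1 - w| A / (1 - |w|) for |w| < 1.
   Writing z = cis t * w turns sum c n z^n into sum a n w^n, so it remains to bound
   |cis t - z| / (1 - |z|) on the Privalov cone.  For that we introduce the Stolz region
   {z. |u - z| <= K (1 - |z|)}, which is closed and convex, and show that it contains
   the closed convex hull of u and the disc of radius r (|u| = 1) when
   K = (1 + r) / (1 - r); for r = 1/2 this gives K = 3 and the bound 3A. *)

lemma abel_partial_summation:
  fixes a :: "nat \<Rightarrow> 'a::comm_ring_1"
  shows "(\<Sum>n<N. a n * w ^ n)
         = (1 - w) * (\<Sum>n<N. (\<Sum>k<Suc n. a k) * w ^ n) + (\<Sum>k<N. a k) * w ^ N"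
  by (induction N) (simp_all add: algebra_simps)

lemma power_series_partial_sum_bound:
  fixes a :: "nat \<Rightarrow> 'a::real_normed_field"
  assumes partial: "\<And>N. norm (\<Sum>k<N. a k) \<le> A" and w: "norm w < 1"
  shows "norm (\<Sum>n<N. a n * w ^ n) \<le> norm (1 - w) * A / (1 - norm w) + A * norm w ^ N"
proof -
  have A_nonneg: "0 \<le> A" using partial[of 0] by simp
  define S where "S = (\<Sum>n<N. (\<Sum>k<Suc n. a k) * w ^ n)"
  have "norm S \<le> (\<Sum>n<N. A * norm w ^ n)"
    unfolding S_def
  proof (rule sum_norm_le)
    show "norm ((\<Sum>k<Suc n. a k) * w ^ n) \<le> A * norm w ^ n" for n
      unfolding norm_mult norm_power by (intro mult_right_mono partial) simp
  qed
  also have "\<dots> = A * ((1 - norm w ^ N) / (1 - norm w))"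
    using w by (simp add: sum_gp_strict flip: sum_distrib_left)
  also have "\<dots> \<le> A / (1 - norm w)"
    using w A_nonneg by (simp add: divide_right_mono mult_left_le)
  finally have S_bound: "norm S \<le> A / (1 - norm w)" .
  have "norm (\<Sum>n<N. a n * w ^ n) \<le> norm ((1 - w) * S) + norm ((\<Sum>k<N. a k) * w ^ N)"
    unfolding abel_partial_summation[of a w N] S_def[symmetric] by (rule norm_triangle_ineq)
  also have "\<dots> = norm (1 - w) * norm S + norm (\<Sum>k<N. a k) * norm w ^ N"
    by (simp only: norm_mult norm_power)
  also have "\<dots> \<le> norm (1 - w) * (A / (1 - norm w)) + A * norm w ^ N"
    by (intro add_mono mult_left_mono mult_right_mono S_bound partial) auto
  finally show ?thesis by simp
qed

lemma power_series_bound_by_partial_sums: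
  fixes a :: "nat \<Rightarrow> 'a::real_normed_field"
  assumes partial: "\<And>N. norm (\<Sum>k<N. a k) \<le> A" and w: "norm w < 1"
    and summable: "summable (\<lambda>n. a n * w ^ n)"
  shows "norm (\<Sum>n. a n * w ^ n) \<le> norm (1 - w) * A / (1 - norm w)"
proof -
  have bound_lim: "(\<lambda>N. norm (1 - w) * A / (1 - norm w) + A * norm w ^ N)
          \<longlonglongrightarrow> norm (1 - w) * A / (1 - norm w) + A * 0"
    using w by (intro tendsto_intros LIMSEQ_power_zero) simp
  have "norm (\<Sum>n. a n * w ^ n) \<le> norm (1 - w) * A / (1 - norm w) + A * 0"
    by (rule tendsto_le[OF _ bound_lim tendsto_norm[OF summable_LIMSEQ[OF summable]]])
       (simp_all add: power_series_partial_sum_bound[OF partial w])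
  then show ?thesis by simp
qed

text \<open>Bounded partial sums force bounded terms: a n is a difference of two partial sums.\<close>
lemma term_bound_of_partial_sums:
  fixes a :: "nat \<Rightarrow> 'a::real_normed_vector"
  assumes partial: "\<And>N. norm (\<Sum>k<N. a k) \<le> A"
  shows "norm (a n) \<le> 2 * A"
proof -
  have "a n = (\<Sum>k<Suc n. a k) - (\<Sum>k<n. a k)" by simp
  then have "norm (a n) \<le> norm (\<Sum>k<Suc n. a k) + norm (\<Sum>k<n. a k)"
    by (metis norm_triangle_ineq4)
  then show ?thesis using partial[of n] partial[of "Suc n"] by linarith
qed

lemma summable_power_series_bounded_coeffs:
  fixes a :: "nat \<Rightarrow> 'a::{real_normed_field,banach}"
  assumes bound: "\<And>n. norm (a n) \<le> B" and z: "norm z < 1"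
  shows "summable (\<lambda>n. a n * z ^ n)"
proof (rule summable_comparison_test')
  show "summable (\<lambda>n. B * norm z ^ n)"
    using z by (intro summable_mult summable_geometric) simp
  show "norm (a n * z ^ n) \<le> B * norm z ^ n" for n
    by (simp add: norm_mult norm_power mult_right_mono bound)
qed

definition stolz_region :: "complex \<Rightarrow> real \<Rightarrow> complex set" where
  "stolz_region u K = {z. norm (u - z) \<le> K * (1 - norm z)}"

lemma closed_stolz_region: "closed (stolz_region u K)"
  unfolding stolz_region_def by (intro closed_Collect_le continuous_intros)

text \<open>Convexity: both |u - z| and K (1 - |z|) behave well under convex combinations, the
  first being convex and the second concave in z (here K >= 0 is needed).\<close>
lemma convex_stolz_region:
  assumes K: "0 \<le> K"
  shows "convex (stolz_region u K)"
proof (rule convexI)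
  fix x y :: complex and s v :: real
  assume "x \<in> stolz_region u K" "y \<in> stolz_region u K"
    and s: "0 \<le> s" and v: "0 \<le> v" and sv: "s + v = 1"
  then have x: "norm (u - x) \<le> K * (1 - norm x)" and y: "norm (u - y) \<le> K * (1 - norm y)"
    by (simp_all add: stolz_region_def)
  have "u - (s *\<^sub>R x + v *\<^sub>R y) = s *\<^sub>R (u - x) + v *\<^sub>R (u - y)"
    using sv by (simp add: algebra_simps flip: scaleR_add_left)
  then have "norm (u - (s *\<^sub>R x + v *\<^sub>R y)) \<le> s * norm (u - x) + v * norm (u - y)"
    using s v norm_triangle_ineq[of "s *\<^sub>R (u - x)" "v *\<^sub>R (u - y)"] by simp
  also have "\<dots> \<le> s * (K * (1 - norm x)) + v * (K * (1 - norm y))"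
    by (intro add_mono mult_left_mono x y s v)
  also have "\<dots> = K * ((s + v) - (s * norm x + v * norm y))"
    by (simp add: algebra_simps)
  also have "\<dots> = K * (1 - (s * norm x + v * norm y))"
    using sv by simp
  also have "\<dots> \<le> K * (1 - norm (s *\<^sub>R x + v *\<^sub>R y))"
    using s v K norm_triangle_ineq[of "s *\<^sub>R x" "v *\<^sub>R y"] by (intro mult_left_mono) auto
  finally show "s *\<^sub>R x + v *\<^sub>R y \<in> stolz_region u K"
    by (simp add: stolz_region_def)
qed

text \<open>The closed convex hull of a unit vector u and the disc of radius r < 1 lies in the
  Stolz region with constant (1 + r) / (1 - r): it suffices to check the generators.\<close>
lemma cone_subset_stolz_region:
  assumes u: "norm u = 1" and r: "0 \<le> r" "r < 1"
  shows "closure (convex hull (insert u (ball 0 r))) \<subseteq> stolz_region u ((1 + r) / (1 - r))"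
proof -
  define K where "K = (1 + r) / (1 - r)"
  have K_nonneg: "0 \<le> K" using r by (simp add: K_def)
  have "z \<in> stolz_region u K" if "norm z < r" for z
  proof -
    have "norm (u - z) \<le> 1 + norm z" using norm_triangle_ineq4[of u z] u by simp
    also have "\<dots> \<le> K * (1 - norm z)"
      using that r by (simp add: K_def field_simps)
    finally show ?thesis by (simp add: stolz_region_def)
  qed
  moreover have "u \<in> stolz_region u K" using u by (simp add: stolz_region_def)
  ultimately have "insert u (ball 0 r) \<subseteq> stolz_region u K" by auto
  then have "convex hull (insert u (ball 0 r)) \<subseteq> stolz_region u K"
    by (rule hull_minimal) (rule convex_stolz_region[OF K_nonneg])
  then show ?thesis unfolding K_def[symmetric]
    by (rule closure_minimal[OF _ closed_stolz_region])
qed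

lemma privalov_cone_subset_stolz_region: "privalov_cone t \<subseteq> stolz_region (cis t) 3"
  using cone_subset_stolz_region[of "cis t" "1/2"] by (simp add: privalov_cone_def)

lemma pla_max_bounds_partial_sums:
  assumes "pla_max c t = ereal A"
  shows "norm (\<Sum>k<N. c k * cis (real k * t)) \<le> A"
proof -
  have "ereal (norm (pla_partial c N t)) \<le> pla_max c t"
    unfolding pla_max_def by (rule SUP_upper) simp
  then show ?thesis
    using assms by (simp add: pla_partial_def cis_conv_exp mult.assoc)
qed

lemma rotate_power_term:
  fixes b z :: complex
  shows "b * z ^ n = (b * cis (real n * t)) * (cis (- t) * z) ^ n"
proof -
  have unit: "cis (real n * t) * cis (- t) ^ n = 1"
    by (metis Complex.DeMoivre cis_mult cis_zero mult_minus_right add.right_inverse)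
  have "(b * cis (real n * t)) * (cis (- t) * z) ^ n
        = b * z ^ n * (cis (real n * t) * cis (- t) ^ n)"
    by (simp only: power_mult_distrib mult_ac)
  then show ?thesis by (simp only: unit mult_1_right)
qed

lemma power_series_bound_in_stolz_region:
  fixes b :: "nat \<Rightarrow> complex"
  assumes partial: "\<And>N. norm (\<Sum>k<N. b k * cis (real k * t)) \<le> A"
    and stolz: "z \<in> stolz_region (cis t) K" and z: "norm z < 1"
    and summable: "summable (\<lambda>n. b n * z ^ n)"
  shows "norm (\<Sum>n. b n * z ^ n) \<le> K * A"
proof -
  define w where "w = cis (- t) * z"
  have rotate: "b n * z ^ n = b n * cis (real n * t) * w ^ n" for n
    unfolding w_def by (rule rotate_power_term)
  have "1 - w = cis (- t) * (cis t - z)"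
    by (simp add: w_def right_diff_distrib cis_mult)
  then have norm_1w: "norm (1 - w) = norm (cis t - z)"
    by (simp add: norm_mult)
  have norm_w: "norm w = norm z" by (simp add: w_def norm_mult)
  have "norm (\<Sum>n. b n * z ^ n) \<le> norm (1 - w) * A / (1 - norm w)"
    unfolding rotate using summable norm_w z
    by (intro power_series_bound_by_partial_sums[OF partial]) (simp_all add: rotate)
  also have "\<dots> \<le> K * A"
  proof -
    have "norm (1 - w) * A \<le> K * (1 - norm w) * A"
      using stolz partial[of 0] unfolding norm_1w norm_w
      by (intro mult_right_mono) (simp_all add: stolz_region_def)
    then have "norm (1 - w) * A \<le> K * A * (1 - norm w)"
      by (simp only: mult_ac)
    then show ?thesis using z by (simp add: norm_w pos_divide_le_eq)
  qed
  finally show ?thesis .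
qed

theorem lemma1:
  fixes g :: "real \<Rightarrow> complex" and c :: "nat \<Rightarrow> complex" and t A :: real
  assumes "g \<in> PLA"
    and "is_pla_coeffs g c"
    and "pla_max c t = ereal A"
  shows "(\<forall>z::complex. norm z < 1 \<longrightarrow> summable (\<lambda>n. c n * z ^ n))
       \<and> (\<forall>z\<in>privalov_cone t. norm z < 1 \<longrightarrow>
            norm (\<Sum>n. c n * z ^ n) \<le> 3 * A)"
proof -
  have partial: "norm (\<Sum>k<N. c k * cis (real k * t)) \<le> A" for N
    by (rule pla_max_bounds_partial_sums[OF assms(3)])
  have "norm (c n) \<le> 2 * A" for n
    using term_bound_of_partial_sums[OF partial, of n] by (simp add: norm_mult)
  then have summable: "summable (\<lambda>n. c n * z ^ n)" if "norm z < 1" for z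
    using summable_power_series_bounded_coeffs that by blast
  moreover have "norm (\<Sum>n. c n * z ^ n) \<le> 3 * A"
    if "z \<in> privalov_cone t" and "norm z < 1" for z
    using power_series_bound_in_stolz_region[OF partial _ that(2) summable[OF that(2)]]
      privalov_cone_subset_stolz_region that(1) by blast
  ultimately show ?thesis by blast
qed

end
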